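(* Let $X_1,X_2,\dots$ be independent uniform random variables on $(0,1]$ and $\mathcal{U}_m^0=(0,X_1,\dots,X_m)$. As $m\to\infty$: $E[D^\alpha(\mathcal{U}_m^0)]\sim\frac{\Gamma(\alpha+1)}{1-\alpha}m^{1-\alpha}$ for $0<\alpha<1$; $E[D^1(\mathcal{U}_m^0)]-\log m\to\gamma-1$; $E[D^\alpha(\mathcal{U}_m^0)]=\frac1{\alpha-1}+O(m^{1-\alpha})$ for $\alpha>1$, where $\gamma$ is Euler's constant.
   Context: For a sequence $(0,x_1,\dots,x_m)$ with $x_i\in(0,1]$ and $x_0:=0$, the directed linear tree joins each $x_i$ ($i\ge1$) to $\max\{x_j:0\le j<i,\ x_j<x_i\}$, and its total weight with exponent $\alpha>0$ is $D^\alpha(0,x_1,\dots,x_m)=\sum_{i=1}^m(x_i-\max\{x_j:0\le j<i,\ x_j<x_i\})^\alpha$. *)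

theory Defs
  imports "HOL-Probability.Probability" "HOL-Library.Landau_Symbols"
begin

text \<open>A sequence (0, x_1, ..., x_m) is encoded by x :: nat => real, using x 1, ..., x m;
  the leading entry x_0 := 0 is implicit.\<close>

definition parent :: "(nat \<Rightarrow> real) \<Rightarrow> nat \<Rightarrow> real" where
  "parent x i = Max ({0} \<union> {x j | j. 1 \<le> j \<and> j < i \<and> x j < x i})"

definition D :: "real \<Rightarrow> nat \<Rightarrow> (nat \<Rightarrow> real) \<Rightarrow> real" where
  "D \<alpha> m x = (\<Sum>i = 1..m. (x i - parent x i) powr \<alpha>)"

definition U :: "nat \<Rightarrow> (nat \<Rightarrow> real) measure" where
  "U m = PiM {1..m} (\<lambda>_. uniform_measure lborel {0<..1})"

definition ED :: "real \<Rightarrow> nat \<Rightarrow> real" where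
  "ED \<alpha> m = (\<integral>x. D \<alpha> m x \<partial>U m)"

end

theory Submission
  imports Defs "HOL-Real_Asymp.Real_Asymp"
begin

(* Put a_i = i! / (\<alpha> + 1)^(i) (rising factorial) = \<alpha> B(\<alpha>, i + 1). The i-th edge has
   expected weight exactly a_i: given X_i = t, the gap between t and its parent exceeds s iff
   none of X_1, ..., X_(i-1) lies in [t - s, t), which has probability (1 - s)^(i-1); so by the
   layer-cake formula
     E[(X_i - parent)^\<alpha>] = \<integral>_0^1 \<integral>_0^t \<alpha> s^(\<alpha>-1) (1 - s)^(i-1) ds dt
                         = \<integral>_0^1 \<alpha> s^(\<alpha>-1) (1 - s)^i ds.
   The partial sums telescope, (\<alpha> - 1) (a_1 + ... + a_m) = 1 - (m + 1) a_m, and Gauss's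
   product for \<Gamma> gives a_m ~ \<Gamma>(\<alpha> + 1) m^(-\<alpha>); for \<alpha> = 1, a_i = 1/(i + 1) and the sum
   is harmonic. *)

definition edge_mean :: "real \<Rightarrow> nat \<Rightarrow> real" where
  "edge_mean \<alpha> i = fact i / pochhammer (\<alpha> + 1) i"

lemma edge_mean_pos: "0 < \<alpha> \<Longrightarrow> 0 < edge_mean \<alpha> i"
  unfolding edge_mean_def by (simp add: pochhammer_pos)

lemma edge_mean_0 [simp]: "edge_mean \<alpha> 0 = 1"
  by (simp add: edge_mean_def)

lemma edge_mean_Suc: "0 < \<alpha> \<Longrightarrow> edge_mean \<alpha> (Suc i) = edge_mean \<alpha> i * (i + 1) / (\<alpha> + i + 1)"
  unfolding edge_mean_def by (simp add: pochhammer_Suc field_simps)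

lemma edge_mean_one: "edge_mean 1 i = 1 / (i + 1)"
  by (induction i) (simp_all add: edge_mean_Suc field_simps)

lemma edge_mean_eq_Beta:
  assumes "0 < \<alpha>"
  shows "edge_mean \<alpha> i = \<alpha> * Beta \<alpha> (i + 1)"
proof -
  have "\<alpha> \<notin> \<int>\<^sub>\<le>\<^sub>0" "\<alpha> + 1 \<notin> \<int>\<^sub>\<le>\<^sub>0" using assms by (auto elim!: nonpos_Ints_cases)
  then have "Gamma (\<alpha> + 1) = \<alpha> * Gamma \<alpha>"
    and "pochhammer (\<alpha> + 1) i = Gamma (\<alpha> + 1 + i) / Gamma (\<alpha> + 1)"
    by (simp_all add: Gamma_plus1 pochhammer_Gamma)
  moreover have "Gamma (real i + 1) = fact i" using Gamma_fact[of i, where 'a = real] by (simp add: add.commute)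
  moreover have "Gamma \<alpha> > 0" "Gamma (\<alpha> + 1 + i) > 0" using assms by auto
  ultimately show ?thesis
    unfolding edge_mean_def Beta_def by (simp add: field_simps add_ac)
qed

lemma sum_edge_mean_telescope:
  assumes "0 < \<alpha>"
  shows "(\<alpha> - 1) * (\<Sum>i=1..m. edge_mean \<alpha> i) = 1 - (m + 1) * edge_mean \<alpha> m"
proof (induction m)
  case (Suc m)
  have "(\<alpha> - 1) * (\<Sum>i=1..Suc m. edge_mean \<alpha> i)
      = 1 - (m + 1) * edge_mean \<alpha> m + (\<alpha> - 1) * edge_mean \<alpha> (Suc m)"
    using Suc by (simp add: algebra_simps)
  also have "\<dots> = 1 - (Suc m + 1) * edge_mean \<alpha> (Suc m)"
    using assms by (simp add: edge_mean_Suc field_simps)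
  finally show ?case by simp
qed simp

lemma sum_edge_mean_one: "(\<Sum>i=1..m. edge_mean 1 i) = harm (Suc m) - 1"
proof (induction m)
  case (Suc m)
  have "(\<Sum>i=1..Suc m. edge_mean 1 i) = harm (Suc m) - 1 + 1 / (Suc m + 1)"
    using Suc by (simp add: edge_mean_one)
  also have "\<dots> = harm (Suc (Suc m)) - 1"
    by (subst (2) harm_Suc) (simp add: field_simps)
  finally show ?case .
qed (simp add: harm_def)

lemma edge_mean_asymp_equiv:
  assumes "0 < \<alpha>"
  shows "edge_mean \<alpha> \<sim>[at_top] (\<lambda>n. Gamma (\<alpha> + 1) * real n powr - \<alpha>)"
proof (rule asymp_equivI'_const)
  have "(\<lambda>n. \<alpha> * Gamma_series \<alpha> n) \<longlonglongrightarrow> \<alpha> * Gamma \<alpha>"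
    by (intro tendsto_intros)
  moreover have "\<alpha> * Gamma \<alpha> = Gamma (\<alpha> + 1)"
    using assms by (simp add: Gamma_plus1 nonpos_Ints_def)
  moreover have "\<forall>\<^sub>F n in sequentially. \<alpha> * Gamma_series \<alpha> n = edge_mean \<alpha> n / real n powr - \<alpha>"
    using eventually_gt_at_top[of 0]
  proof eventually_elim
    case (elim n)
    then show ?case using assms pochhammer_pos[of "\<alpha> + 1" n]
      by (simp add: Gamma_series_def edge_mean_def pochhammer_rec powr_def exp_minus field_simps)
  qed
  ultimately show "(\<lambda>n. edge_mean \<alpha> n / real n powr - \<alpha>) \<longlonglongrightarrow> Gamma (\<alpha> + 1)"
    by (simp add: tendsto_cong)
qed (use Gamma_real_pos[of "\<alpha> + 1"] assms in force)

lemma Suc_times_edge_mean_asymp_equiv: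
  assumes "0 < \<alpha>"
  shows "(\<lambda>n. (real n + 1) * edge_mean \<alpha> n) \<sim>[at_top] (\<lambda>n. Gamma (\<alpha> + 1) * real n powr (1 - \<alpha>))"
proof -
  have "(\<lambda>n. real n + 1) \<sim>[at_top] real" by real_asymp
  then have "(\<lambda>n. (real n + 1) * edge_mean \<alpha> n)
      \<sim>[at_top] (\<lambda>n. real n * (Gamma (\<alpha> + 1) * real n powr - \<alpha>))"
    by (intro asymp_equiv_mult edge_mean_asymp_equiv assms)
  also have "\<forall>\<^sub>F n in at_top.
      real n * (Gamma (\<alpha> + 1) * real n powr - \<alpha>) = Gamma (\<alpha> + 1) * real n powr (1 - \<alpha>)"
    using eventually_gt_at_top[of 0] by eventually_elim (simp add: powr_diff powr_minus field_simps)
  finally show ?thesis .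
qed

lemma sum_edge_mean_asymp_equiv:
  assumes "0 < \<alpha>" "\<alpha> < 1"
  shows "(\<lambda>m. \<Sum>i=1..m. edge_mean \<alpha> i) \<sim>[at_top] (\<lambda>m. Gamma (\<alpha> + 1) / (1 - \<alpha>) * real m powr (1 - \<alpha>))"
proof -
  have "Gamma (\<alpha> + 1) \<noteq> 0"
    using Gamma_real_pos[of "\<alpha> + 1"] assms by force
  then have "(\<lambda>_. -1) \<in> o(\<lambda>m. Gamma (\<alpha> + 1) * real m powr (1 - \<alpha>))"
    using assms by simp real_asymp
  then have "(\<lambda>m. (real m + 1) * edge_mean \<alpha> m + -1)
      \<sim>[at_top] (\<lambda>m. Gamma (\<alpha> + 1) * real m powr (1 - \<alpha>))"
    using Suc_times_edge_mean_asymp_equiv[OF assms(1)] by (subst asymp_equiv_add_right)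
  then have "(\<lambda>m. ((real m + 1) * edge_mean \<alpha> m - 1) / (1 - \<alpha>)) \<sim>[at_top]
      (\<lambda>m. Gamma (\<alpha> + 1) * real m powr (1 - \<alpha>) / (1 - \<alpha>))"
    by (intro asymp_equiv_intros) simp
  moreover have "(\<Sum>i=1..m. edge_mean \<alpha> i) = ((real m + 1) * edge_mean \<alpha> m - 1) / (1 - \<alpha>)" for m
    using sum_edge_mean_telescope[OF assms(1), of m] assms(2) by (simp add: field_simps)
  ultimately show ?thesis by simp
qed

lemma sum_edge_mean_one_minus_ln:
  "(\<lambda>m. (\<Sum>i=1..m. edge_mean 1 i) - ln (real m)) \<longlonglongrightarrow> euler_mascheroni - 1"
proof -
  have "(\<lambda>m. (harm m - ln (real m)) + inverse (real (Suc m)) - 1) \<longlonglongrightarrow> euler_mascheroni + 0 - 1"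
    by (intro tendsto_intros euler_mascheroni_LIMSEQ LIMSEQ_inverse_real_of_nat)
  moreover have "(\<Sum>i=1..m. edge_mean 1 i) - ln (real m)
      = harm m - ln (real m) + inverse (real (Suc m)) - 1" for m
    by (simp only: sum_edge_mean_one) (simp add: harm_Suc)
  ultimately show ?thesis by (simp only: add_0_right)
qed

lemma sum_edge_mean_minus_bigo:
  assumes "1 < \<alpha>"
  shows "(\<lambda>m. (\<Sum>i=1..m. edge_mean \<alpha> i) - 1 / (\<alpha> - 1)) \<in> O(\<lambda>m. real m powr (1 - \<alpha>))"
proof -
  have "(\<lambda>m. (real m + 1) * edge_mean \<alpha> m) \<in> O(\<lambda>m. Gamma (\<alpha> + 1) * real m powr (1 - \<alpha>))"
    using assms by (intro asymp_equiv_imp_bigo Suc_times_edge_mean_asymp_equiv) simp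
  moreover have "(\<Sum>i=1..m. edge_mean \<alpha> i) - 1 / (\<alpha> - 1)
      = - (1 / (\<alpha> - 1)) * ((real m + 1) * edge_mean \<alpha> m)" for m
  proof -
    have "(\<Sum>i=1..m. edge_mean \<alpha> i) = (1 - (real m + 1) * edge_mean \<alpha> m) / (\<alpha> - 1)"
      using sum_edge_mean_telescope[of \<alpha> m] assms by (simp add: field_simps)
    then show ?thesis by (simp add: diff_divide_distrib)
  qed
  moreover have "Gamma (\<alpha> + 1) \<noteq> 0"
    using Gamma_real_pos[of "\<alpha> + 1"] assms by force
  ultimately show ?thesis using assms by simp
qed

abbreviation uniform01 :: "real measure" where
  "uniform01 \<equiv> uniform_measure lborel {0<..1}"

lemma nn_integral_powr_derivative:
  assumes "0 < \<alpha>" "0 \<le> c"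
  shows "(\<integral>\<^sup>+ s. ennreal (\<alpha> * s powr (\<alpha> - 1)) * indicator {0<..<c} s \<partial>lborel) = ennreal (c powr \<alpha>)"
proof -
  have "((\<lambda>s. \<alpha> * s powr (\<alpha> - 1)) has_integral \<alpha> * (c powr (\<alpha> - 1 + 1) / (\<alpha> - 1 + 1))) {0..c}"
    using assms by (intro has_integral_mult_right has_integral_powr_from_0) auto
  then have "((\<lambda>s. \<alpha> * s powr (\<alpha> - 1)) has_integral c powr \<alpha>) {0<..<c}"
    using assms by (simp add: has_integral_Icc_iff_Ioo)
  then show ?thesis
    using assms by (intro nn_integral_has_integral_lebesgue') auto
qed

lemma nn_integral_Beta:
  assumes "0 < a" "0 < b"
  shows "(\<integral>\<^sup>+ s. ennreal (s powr (a - 1) * (1 - s) powr (b - 1)) * indicator {0<..<1} s \<partial>lborel)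
    = ennreal (Beta a b)"
  using has_integral_Beta_real[OF assms]
  by (intro nn_integral_has_integral_lebesgue') (auto simp: has_integral_Icc_iff_Ioo)

lemma nn_integral_uniform01_integral_upto:
  fixes h :: "real \<Rightarrow> ennreal"
  assumes [measurable]: "h \<in> borel_measurable borel"
  shows "(\<integral>\<^sup>+ t. (\<integral>\<^sup>+ s. h s * indicator {0<..<t} s \<partial>lborel) \<partial>uniform01)
    = (\<integral>\<^sup>+ s. h s * ennreal (1 - s) * indicator {0<..<1} s \<partial>lborel)"
proof -
  have [measurable]: "Measurable.pred (borel \<Otimes>\<^sub>M borel) (\<lambda>p::real \<times> real. snd p \<in> {0<..<fst p})"
    unfolding greaterThanLessThan_iff by measurable
  have "(\<integral>\<^sup>+ t. (\<integral>\<^sup>+ s. h s * indicator {0<..<t} s \<partial>lborel) \<partial>uniform01)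
      = (\<integral>\<^sup>+ t. (\<integral>\<^sup>+ s. h s * indicator {0<..<t} s \<partial>lborel) * indicator {0<..1} t \<partial>lborel)"
    by (subst nn_integral_uniform_measure) (auto simp: divide_ennreal_def)
  also have "\<dots> = (\<integral>\<^sup>+ t. (\<integral>\<^sup>+ s. h s * indicator {0<..<t} s * indicator {0<..1} t \<partial>lborel) \<partial>lborel)"
    by (simp add: nn_integral_multc)
  also have "\<dots> = (\<integral>\<^sup>+ s. (\<integral>\<^sup>+ t. h s * (indicator {0<..<t} s * indicator {0<..1} t) \<partial>lborel) \<partial>lborel)"
    by (subst lborel_pair.Fubini') (simp_all add: mult.assoc)
  also have "\<dots> = (\<integral>\<^sup>+ s. h s * ennreal (1 - s) * indicator {0<..<1} s \<partial>lborel)"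
  proof (rule nn_integral_cong)
    fix s :: real
    have "(\<lambda>t. indicator {0<..<t} s * indicator {0<..1} t :: ennreal)
        = (\<lambda>t. indicator {0<..<1} s * indicator {s<..1} t)"
      by (auto simp: fun_eq_iff split: split_indicator)
    then show "(\<integral>\<^sup>+ t. h s * (indicator {0<..<t} s * indicator {0<..1} t) \<partial>lborel)
        = h s * ennreal (1 - s) * indicator {0<..<1} s"
      by (simp add: nn_integral_cmult mult_ac split: split_indicator)
  qed
  finally show ?thesis .
qed

lemma emeasure_PiM_all_in:
  assumes "prob_space M" "finite I" "J \<subseteq> I" "A \<in> sets M"
  shows "emeasure (PiM I (\<lambda>_. M)) {x \<in> space (PiM I (\<lambda>_. M)). \<forall>j\<in>J. x j \<in> A} = emeasure M A ^ card J"
proof -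
  interpret product_sigma_finite "\<lambda>_. M"
    using assms(1) by (simp add: product_sigma_finite_def prob_space_imp_sigma_finite)
  have "{x \<in> space (PiM I (\<lambda>_. M)). \<forall>j\<in>J. x j \<in> A} = PiE I (\<lambda>j. if j \<in> J then A else space M)"
    using sets.sets_into_space[OF assms(4)] assms(3)
    by (auto simp: space_PiM PiE_def Pi_iff extensional_def split: if_splits) blast
  also have "emeasure (PiM I (\<lambda>_. M)) \<dots> = (\<Prod>j\<in>I. emeasure M (if j \<in> J then A else space M))"
    using assms by (intro emeasure_PiM) auto
  also have "\<dots> = (\<Prod>j\<in>J. emeasure M A)"
    using assms prob_space.emeasure_space_1[OF assms(1)] by (intro prod.mono_neutral_cong_right) auto
  also have "\<dots> = emeasure M A ^ card J"
    by simp
  finally show ?thesis .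
qed

lemma emeasure_uniform01_compl_Ico:
  assumes "0 \<le> s" "s < t" "t \<le> 1"
  shows "emeasure uniform01 (- {t - s..<t}) = ennreal (1 - s)"
proof -
  have "{0<..1} \<inter> - {t - s..<t} = {0<..<t - s} \<union> {t..1}"
    using assms by auto
  then have "emeasure uniform01 (- {t - s..<t}) = emeasure lborel ({0<..<t - s} \<union> {t..1})"
    by (simp add: divide_ennreal_def)
  also have "\<dots> = emeasure lborel {0<..<t - s} + emeasure lborel {t..1}"
    using assms by (intro plus_emeasure[symmetric]) auto
  also have "\<dots> = ennreal (1 - s)"
    using assms by (simp add: ennreal_plus[symmetric])
  finally show ?thesis .
qed

definition parent_below :: "nat \<Rightarrow> (nat \<Rightarrow> real) \<Rightarrow> real \<Rightarrow> real" where
  "parent_below i x t = Max ({0} \<union> {x j | j. 1 \<le> j \<and> j < i \<and> x j < t})"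

lemma parent_fun_upd: "parent (x(i := t)) i = parent_below i x t"
  unfolding parent_def parent_below_def by (rule arg_cong[where f = Max]) auto

lemma less_gap_parent_below_iff:
  "s < t - parent_below i x t \<longleftrightarrow> s < t \<and> (\<forall>j\<in>{1..<i}. x j \<notin> {t - s..<t})"
proof -
  have "finite {x j | j. 1 \<le> j \<and> j < i \<and> x j < t}"
    by (rule finite_subset[of _ "x ` {..<i}"]) auto
  then have "parent_below i x t < t - s \<longleftrightarrow> 0 < t - s \<and> (\<forall>j\<in>{1..<i}. x j < t \<longrightarrow> x j < t - s)"
    unfolding parent_below_def by (subst Max_less_iff) (auto, blast)
  then show ?thesis by auto
qed

lemma powr_gap_parent_below_eq_nn_integral:
  assumes "0 < \<alpha>" "0 < t"
  shows "ennreal ((t - parent_below i x t) powr \<alpha>)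
    = (\<integral>\<^sup>+ s. ennreal (\<alpha> * s powr (\<alpha> - 1)) * indicator {0<..<t} s
                 * of_bool (\<forall>j\<in>{1..<i}. x j \<notin> {t - s..<t}) \<partial>lborel)"
proof -
  have "0 \<le> t - parent_below i x t"
    using less_gap_parent_below_iff[of 0 t i x] assms by simp
  then have "ennreal ((t - parent_below i x t) powr \<alpha>)
      = (\<integral>\<^sup>+ s. ennreal (\<alpha> * s powr (\<alpha> - 1)) * indicator {0<..<t - parent_below i x t} s \<partial>lborel)"
    using assms by (simp add: nn_integral_powr_derivative)
  also have "\<dots> = (\<integral>\<^sup>+ s. ennreal (\<alpha> * s powr (\<alpha> - 1)) * indicator {0<..<t} s
                 * of_bool (\<forall>j\<in>{1..<i}. x j \<notin> {t - s..<t}) \<partial>lborel)"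
    by (intro nn_integral_cong) (auto simp: less_gap_parent_below_iff split: split_indicator)
  finally show ?thesis .
qed

lemma nn_integral_gap_parent_below_powr:
  assumes "0 < \<alpha>" "i \<in> {1..m}" "0 < t" "t \<le> 1"
  shows "(\<integral>\<^sup>+ x. ennreal ((t - parent_below i x t) powr \<alpha>) \<partial>PiM ({1..m} - {i}) (\<lambda>_. uniform01))
    = (\<integral>\<^sup>+ s. ennreal (\<alpha> * s powr (\<alpha> - 1) * (1 - s) ^ (i - 1)) * indicator {0<..<t} s \<partial>lborel)"
    (is "(\<integral>\<^sup>+ x. _ \<partial>?P) = _")
proof -
  interpret P: prob_space ?P
    by (intro prob_space_PiM prob_space_uniform_measure) auto
  interpret pair_sigma_finite ?P lborel ..
  have [measurable]: "j \<in> {1..m} - {i}" if "j \<in> {1..<i}" for j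
    using that assms(2) by auto
  have avoid:
    "(\<integral>\<^sup>+ x. of_bool (\<forall>j\<in>{1..<i}. x j \<notin> {t - s..<t}) \<partial>?P) = ennreal ((1 - s) ^ (i - 1))"
    if "0 < s" "s < t" for s
  proof -
    have "(\<integral>\<^sup>+ x. of_bool (\<forall>j\<in>{1..<i}. x j \<notin> {t - s..<t}) \<partial>?P)
        = (\<integral>\<^sup>+ x. indicator {x \<in> space ?P. \<forall>j\<in>{1..<i}. x j \<in> - {t - s..<t}} x \<partial>?P)"
      by (intro nn_integral_cong) (auto split: split_indicator)
    also have "\<dots> = emeasure ?P {x \<in> space ?P. \<forall>j\<in>{1..<i}. x j \<in> - {t - s..<t}}"
      by (rule nn_integral_indicator) measurable
    also have "\<dots> = emeasure uniform01 (- {t - s..<t}) ^ card {1..<i}"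
      using assms(2) by (intro emeasure_PiM_all_in prob_space_uniform_measure) auto
    also have "\<dots> = ennreal ((1 - s) ^ (i - 1))"
      using that assms
      by (simp add: emeasure_uniform01_compl_Ico ennreal_power del: emeasure_uniform_measure)
    finally show ?thesis .
  qed
  have "(\<integral>\<^sup>+ x. ennreal ((t - parent_below i x t) powr \<alpha>) \<partial>?P)
      = (\<integral>\<^sup>+ x. (\<integral>\<^sup>+ s. ennreal (\<alpha> * s powr (\<alpha> - 1)) * indicator {0<..<t} s
                 * of_bool (\<forall>j\<in>{1..<i}. x j \<notin> {t - s..<t}) \<partial>lborel) \<partial>?P)"
    using assms by (simp add: powr_gap_parent_below_eq_nn_integral)
  also have "\<dots> = (\<integral>\<^sup>+ s. (\<integral>\<^sup>+ x. ennreal (\<alpha> * s powr (\<alpha> - 1)) * indicator {0<..<t} s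
                 * of_bool (\<forall>j\<in>{1..<i}. x j \<notin> {t - s..<t}) \<partial>?P) \<partial>lborel)"
    by (rule Fubini'[symmetric]) (unfold atLeastLessThan_iff, measurable)
  also have "\<dots>
      = (\<integral>\<^sup>+ s. ennreal (\<alpha> * s powr (\<alpha> - 1) * (1 - s) ^ (i - 1)) * indicator {0<..<t} s \<partial>lborel)"
  proof (rule nn_integral_cong)
    fix s :: real
    show "(\<integral>\<^sup>+ x. ennreal (\<alpha> * s powr (\<alpha> - 1)) * indicator {0<..<t} s
                 * of_bool (\<forall>j\<in>{1..<i}. x j \<notin> {t - s..<t}) \<partial>?P)
        = ennreal (\<alpha> * s powr (\<alpha> - 1) * (1 - s) ^ (i - 1)) * indicator {0<..<t} s"
      using assms avoid[of s] by (subst nn_integral_cmult) (auto simp: ennreal_mult split: split_indicator)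
  qed
  finally show ?thesis .
qed

lemma parent_eq_Max_image:
  "1 \<le> i \<Longrightarrow> parent x i = Max ((\<lambda>j. if 1 \<le> j \<and> x j < x i then x j else 0) ` {0..<i})"
  unfolding parent_def by (rule arg_cong[where f = Max]) force

lemma borel_measurable_parent:
  assumes "sets M = sets borel" "1 \<le> i" "{1..i} \<subseteq> I"
  shows "(\<lambda>x. parent x i) \<in> borel_measurable (PiM I (\<lambda>_. M))"
proof -
  note [measurable_cong] = assms(1)
  have [measurable]: "i \<in> I"
    using assms by auto
  have "(\<lambda>x. Max ((\<lambda>j. if 1 \<le> j \<and> x j < x i then x j else 0) ` {0..<i}))
      \<in> borel_measurable (PiM I (\<lambda>_. M))"
  proof (rule borel_measurable_Max)
    fix j assume j: "j \<in> {0..<i}"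
    show "(\<lambda>x. if 1 \<le> j \<and> x j < x i then x j else 0) \<in> borel_measurable (PiM I (\<lambda>_. M))"
    proof (cases "1 \<le> j")
      case True
      then have [measurable]: "j \<in> I"
        using j assms by auto
      show ?thesis by measurable
    qed simp
  qed simp
  then show ?thesis
    using assms(2) by (simp add: parent_eq_Max_image)
qed

lemma nn_integral_edge_weight:
  assumes "0 < \<alpha>" "i \<in> {1..m}"
  shows "(\<integral>\<^sup>+ x. ennreal ((x i - parent x i) powr \<alpha>) \<partial>PiM {1..m} (\<lambda>_. uniform01))
    = ennreal (edge_mean \<alpha> i)"
proof -
  interpret product_sigma_finite "\<lambda>_::nat. uniform01"
    by (simp add: product_sigma_finite_def prob_space_imp_sigma_finite prob_space_uniform_measure)
  define I where "I = {1..m} - {i}"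
  define h where "h s = ennreal (\<alpha> * s powr (\<alpha> - 1) * (1 - s) ^ (i - 1))" for s
  have ins: "{1..m} = insert i I"
    using assms(2) by (auto simp: I_def)
  have [measurable]: "i \<in> {1..m}" "(\<lambda>x. parent x i) \<in> borel_measurable (PiM {1..m} (\<lambda>_. uniform01))"
    using assms(2) by (auto intro: borel_measurable_parent)
  have "(\<lambda>x. ennreal ((x i - parent x i) powr \<alpha>)) \<in> borel_measurable (PiM (insert i I) (\<lambda>_. uniform01))"
    unfolding ins[symmetric] by measurable
  then have "(\<integral>\<^sup>+ x. ennreal ((x i - parent x i) powr \<alpha>) \<partial>PiM {1..m} (\<lambda>_. uniform01))
      = (\<integral>\<^sup>+ t. (\<integral>\<^sup>+ x. ennreal ((t - parent_below i x t) powr \<alpha>) \<partial>PiM I (\<lambda>_. uniform01))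
           \<partial>uniform01)"
    unfolding ins by (subst product_nn_integral_insert_rev) (auto simp: I_def parent_fun_upd)
  also have "\<dots> = (\<integral>\<^sup>+ t. (\<integral>\<^sup>+ s. h s * indicator {0<..<t} s \<partial>lborel) \<partial>uniform01)"
    using nn_integral_gap_parent_below_powr[OF assms]
    by (intro nn_integral_cong_AE AE_uniform_measureI AE_I2) (auto simp: I_def h_def)
  also have "\<dots> = (\<integral>\<^sup>+ s. h s * ennreal (1 - s) * indicator {0<..<1} s \<partial>lborel)"
    by (rule nn_integral_uniform01_integral_upto) (simp add: h_def)
  also have "\<dots> = (\<integral>\<^sup>+ s. ennreal \<alpha>
      * (ennreal (s powr (\<alpha> - 1) * (1 - s) powr (real (i + 1) - 1)) * indicator {0<..<1} s) \<partial>lborel)"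
  proof (rule nn_integral_cong)
    fix s :: real
    have "(1 - s) ^ (i - 1) * (1 - s) = (1 - s) ^ i"
      using assms(2) by (cases i) auto
    then show "h s * ennreal (1 - s) * indicator {0<..<1} s = ennreal \<alpha> * (ennreal (s powr (\<alpha> - 1)
        * (1 - s) powr (real (i + 1) - 1)) * indicator {0<..<1} s)"
      using assms(1)
      by (auto simp: h_def powr_realpow ennreal_mult'[symmetric] mult_ac split: split_indicator)
  qed
  also have "\<dots> = ennreal (\<alpha> * Beta \<alpha> (real (i + 1)))"
    using assms(1) nn_integral_Beta[of \<alpha> "real (i + 1)"] by (simp add: nn_integral_cmult ennreal_mult')
  finally show ?thesis
    using assms(1) by (simp add: edge_mean_eq_Beta)
qed

lemma ED_eq_sum_edge_mean:
  assumes "0 < \<alpha>"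
  shows "ED \<alpha> m = (\<Sum>i=1..m. edge_mean \<alpha> i)"
proof -
  let ?P = "PiM {1..m} (\<lambda>_. uniform01)"
  have edge_measurable [measurable]:
    "(\<lambda>x. (x i - parent x i) powr \<alpha>) \<in> borel_measurable ?P" if "i \<in> {1..m}" for i
  proof -
    have [measurable]: "i \<in> {1..m}" "(\<lambda>x. parent x i) \<in> borel_measurable ?P"
      using that by (auto intro: borel_measurable_parent)
    show ?thesis by measurable
  qed
  have D_measurable: "D \<alpha> m \<in> borel_measurable ?P"
    unfolding D_def by (rule borel_measurable_sum) (rule edge_measurable)
  have "(\<integral>\<^sup>+ x. ennreal (D \<alpha> m x) \<partial>?P)
      = (\<integral>\<^sup>+ x. (\<Sum>i\<in>{1..m}. ennreal ((x i - parent x i) powr \<alpha>)) \<partial>?P)"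
    unfolding D_def by (intro nn_integral_cong) (simp add: sum_ennreal)
  also have "\<dots> = (\<Sum>i\<in>{1..m}. (\<integral>\<^sup>+ x. ennreal ((x i - parent x i) powr \<alpha>) \<partial>?P))"
    by (rule nn_integral_sum) measurable
  also have "\<dots> = (\<Sum>i\<in>{1..m}. ennreal (edge_mean \<alpha> i))"
    using assms by (intro sum.cong refl nn_integral_edge_weight)
  also have "\<dots> = ennreal (\<Sum>i=1..m. edge_mean \<alpha> i)"
    using edge_mean_pos[OF assms] by (simp add: less_imp_le)
  finally have "(\<integral>\<^sup>+ x. ennreal (D \<alpha> m x) \<partial>?P) = ennreal (\<Sum>i=1..m. edge_mean \<alpha> i)" .
  moreover have "ED \<alpha> m = enn2real (\<integral>\<^sup>+ x. ennreal (D \<alpha> m x) \<partial>?P)"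
    unfolding ED_def U_def
    by (intro integral_eq_nn_integral AE_I2 D_measurable) (auto simp: D_def intro!: sum_nonneg)
  ultimately show ?thesis
    using edge_mean_pos[OF assms] by (simp add: sum_nonneg less_imp_le)
qed

theorem proposition1:
  shows "(\<forall>\<alpha>::real. 0 < \<alpha> \<and> \<alpha> < 1 \<longrightarrow>
            (\<lambda>m. ED \<alpha> m) \<sim>[at_top] (\<lambda>m. Gamma (\<alpha> + 1) / (1 - \<alpha>) * real m powr (1 - \<alpha>)))
       \<and> ((\<lambda>m. ED 1 m - ln (real m)) \<longlonglongrightarrow> euler_mascheroni - 1)
       \<and> (\<forall>\<alpha>::real. 1 < \<alpha> \<longrightarrow>
            (\<lambda>m. ED \<alpha> m - 1 / (\<alpha> - 1)) \<in> O(\<lambda>m. real m powr (1 - \<alpha>)))"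
  using sum_edge_mean_asymp_equiv sum_edge_mean_one_minus_ln sum_edge_mean_minus_bigo
  by (simp add: ED_eq_sum_edge_mean)

end
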